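(* Let $E$ and $F$ be complex Banach spaces, let $A_m:\mathrm{dom}(A_m)\subseteq E\to E$ and $B:\mathrm{dom}(B)\subseteq F\to F$ be linear operators, and let $L:\mathrm{dom}(A_m)\to F$ be linear, surjective and bounded with respect to the graph norm of $A_m$. Assume that the restriction $A_0$ of $A_m$ to $\ker(L)$ generates a strongly continuous semigroup $(T_0(t))_{t\ge0}$ on $E$, that $B$ generates a strongly continuous semigroup $(S(t))_{t\ge0}$ on $F$, that $x\mapsto(A_mx,Lx)$, $\mathrm{dom}(A_m)\to E\times F$, is closed, and that $A_0$ and $B$ are boundedly invertible. Let $D_0:=(L|_{\ker(A_m)})^{-1}:F\to E$. For $y\in\mathrm{dom}(B)$ and $t\ge0$ let $Q(t)y=D_0S(t)y-T_0(t)D_0y-\int_0^tT_0(t-s)D_0S(s)By\,\mathrm{d}s$, and assume that each $Q(t)$ extends to a bounded operator $F\to E$ with $\limsup_{t\downarrow0}\|Q(t)\|<\infty$; let $\mathcal{T}(t)=\begin{pmatrix}T_0(t)&Q(t)\\0&S(t)\end{pmatrix}$ on $E\times F$, normed by $\|(x,y)\|=\|x\|+\|y\|$. For each $\tau>0$ let $V(\tau):\mathrm{dom}(B)\to E$ be linear, $\mathbb{T}(\tau)=\begin{pmatrix}T_0(\tau)&V(\tau)\\0&S(\tau)\end{pmatrix}$, $V_n(\tau)=\sum_{j=0}^{n-1}T_0((n-1-j)\tau)V(\tau)S(j\tau)$, and $\mathcal{R}_0=\begin{pmatrix}I&-D_0\\0&I\end{pmatrix}$. Let $D\subseteq\mathrm{dom}(B)$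 be a subspace equipped with a norm $\|\cdot\|_D$, let $r\ge0$, $t_{\max}>0$ and $C\ge0$ be such that for every $y\in D$, every $t\in[0,t_{\max}]$ and every integer $n\ge1$ \[ \Bigl\|V_n(\tfrac tn)y+\int_0^tT_0(t-s)D_0S(s)By\,\mathrm{d}s\Bigr\|\le\frac{Ct^r\log(n)}{n^r}\|y\|_D. \] Then for every $x\in E$, $y\in D$, $t\in[0,t_{\max}]$ and integer $n\ge1$, \[ \Bigl\|\mathcal{R}_0^{-1}\mathbb{T}(\tfrac tn)^n\mathcal{R}_0\binom{x}{y}-\mathcal{T}(t)\binom{x}{y}\Bigr\|\le\frac{Ct^r\log(n)}{n^r}\|y\|_D. \] In particular, for every $p\in(0,r)$ and every $\boldsymbol{u}_0\in E\times D$ there is $C'\ge0$ with $\|\mathcal{T}(t)\boldsymbol{u}_0-\mathcal{R}_0^{-1}\mathbb{T}(\tfrac tn)^n\mathcal{R}_0\boldsymbol{u}_0\|\le C'n^{-p}$ for all $t\in[0,t_{\max}]$ and all integers $n\ge1$.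
   Context: Under the stated assumptions $D_0$ is bounded and $(\mathcal{T}(t))_{t\ge0}$ is the $C_0$-semigroup generated by $\mathrm{diag}(A_m,B)$ with domain $\{(x,y)\in\mathrm{dom}(A_m)\times\mathrm{dom}(B):Lx=y\}$. *)

theory Defs
  imports "HOL-Analysis.Analysis"
begin

definition linear_op_on :: "'a::real_vector set \<Rightarrow> ('a \<Rightarrow> 'b::real_vector) \<Rightarrow> bool" where
  "linear_op_on D f \<longleftrightarrow>
     (\<forall>x\<in>D. \<forall>y\<in>D. f (x + y) = f x + f y) \<and> (\<forall>c. \<forall>x\<in>D. f (c *\<^sub>R x) = c *\<^sub>R f x)"

definition c0_semigroup :: "(real \<Rightarrow> 'a::banach \<Rightarrow> 'a) \<Rightarrow> bool" where
  "c0_semigroup T \<longleftrightarrow>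
     (\<forall>t\<ge>0. bounded_linear (T t)) \<and> T 0 = id \<and>
     (\<forall>s\<ge>0. \<forall>t\<ge>0. T (s + t) = T s \<circ> T t) \<and>
     (\<forall>x. continuous_on {0..} (\<lambda>t. T t x))"

definition generates :: "'a::banach set \<Rightarrow> ('a \<Rightarrow> 'a) \<Rightarrow> (real \<Rightarrow> 'a \<Rightarrow> 'a) \<Rightarrow> bool" where
  "generates D A T \<longleftrightarrow>
     c0_semigroup T \<and>
     D = {x. \<exists>l. ((\<lambda>h. (1 / h) *\<^sub>R (T h x - x)) \<longlongrightarrow> l) (at_right 0)} \<and>
     (\<forall>x\<in>D. ((\<lambda>h. (1 / h) *\<^sub>R (T h x - x)) \<longlongrightarrow> A x) (at_right 0))"

definition boundedly_invertible :: "'a::real_normed_vector set \<Rightarrow> ('a \<Rightarrow> 'b::real_normed_vector) \<Rightarrow> bool" where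
  "boundedly_invertible D A \<longleftrightarrow>
     bij_betw A D UNIV \<and> bounded_linear (the_inv_into D A)"

definition pnorm :: "'a::real_normed_vector \<times> 'b::real_normed_vector \<Rightarrow> real" where
  "pnorm u = norm (fst u) + norm (snd u)"

end

theory Submission
  imports Defs
begin

text \<open>Conjugating by the shear \<open>R\<^sub>0\<close> turns the \<open>n\<close>-th power of the triangular
  matrix \<open>\<bbbT>(t/n)\<close> into a triangular matrix with diagonal \<open>T\<^sub>0(t), S(t)\<close>. Subtracting
  \<open>\<T>(t)\<close>, the terms \<open>D\<^sub>0 S(t) y - T\<^sub>0(t) D\<^sub>0 y\<close> cancel against \<open>Q(t) y\<close>, so the error
  is \<open>(V\<^sub>n(t/n) y + \<integral>\<^sub>0\<^sup>t T\<^sub>0(t-s) D\<^sub>0 S(s) B y ds, 0)\<close>, precisely the quantity bounded by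
  hypothesis. The polynomial rate follows from \<open>ln n \<le> n\<^sup>r\<^sup>-\<^sup>p / (r - p)\<close>.\<close>

lemma c0_semigroup_linear: "c0_semigroup T \<Longrightarrow> 0 \<le> t \<Longrightarrow> linear (T t)"
  unfolding c0_semigroup_def by (simp add: bounded_linear.linear)

lemma c0_semigroup_zero: "c0_semigroup T \<Longrightarrow> T 0 x = x"
  unfolding c0_semigroup_def by simp

lemma c0_semigroup_add:
  "c0_semigroup T \<Longrightarrow> 0 \<le> s \<Longrightarrow> 0 \<le> t \<Longrightarrow> T s (T t x) = T (s + t) x"
  unfolding c0_semigroup_def by simp

lemma generates_c0_semigroup: "generates D A T \<Longrightarrow> c0_semigroup T"
  unfolding generates_def by simp

lemma triangular_funpow:
  fixes T0 :: "real \<Rightarrow> 'e::banach \<Rightarrow> 'e" and S :: "real \<Rightarrow> 'f::banach \<Rightarrow> 'f"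
    and V :: "'f \<Rightarrow> 'e"
  assumes T0: "c0_semigroup T0" and S: "c0_semigroup S" and \<tau>: "0 \<le> \<tau>"
  shows "((\<lambda>(x, y). (T0 \<tau> x + V y, S \<tau> y)) ^^ n) (x, y) =
    (T0 (real n * \<tau>) x + (\<Sum>j<n. T0 (real (n - 1 - j) * \<tau>) (V (S (real j * \<tau>) y))),
     S (real n * \<tau>) y)"
proof (induction n)
  case 0
  then show ?case by (simp add: c0_semigroup_zero[OF T0] c0_semigroup_zero[OF S])
next
  case (Suc n)
  have lin: "linear (T0 \<tau>)" by (rule c0_semigroup_linear[OF T0 \<tau>])
  have shift: "T0 \<tau> (T0 (real k * \<tau>) z) = T0 (real (Suc k) * \<tau>) z" for k z
    using c0_semigroup_add[OF T0 \<tau>, of "real k * \<tau>"] \<tau> by (simp add: algebra_simps)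
  have "T0 \<tau> (\<Sum>j<n. T0 (real (n - 1 - j) * \<tau>) (V (S (real j * \<tau>) y)))
      = (\<Sum>j<n. T0 (real (Suc n - 1 - j) * \<tau>) (V (S (real j * \<tau>) y)))"
  proof -
    have index: "j < n \<Longrightarrow> Suc n - 1 - j = Suc (n - 1 - j)" for j
      by simp
    show ?thesis
      unfolding linear_sum[OF lin]
      by (rule sum.cong) (auto simp only: lessThan_iff shift index)
  qed
  moreover have "S \<tau> (S (real n * \<tau>) y) = S (real (Suc n) * \<tau>) y"
    using c0_semigroup_add[OF S \<tau>, of "real n * \<tau>"] \<tau> by (simp add: algebra_simps)
  ultimately show ?case
    using Suc by (simp add: linear_add[OF lin] shift c0_semigroup_zero[OF T0])
qed

lemma inv_shear:
  fixes D :: "'b \<Rightarrow> 'a::ab_group_add"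
  shows "inv (\<lambda>(x, y). (x - D y, y)) (a, b) = (a + D b, b)"
proof (rule inv_f_eq)
  show "inj (\<lambda>(x, y). (x - D y, y :: 'b))" by (rule injI) auto
qed simp

lemma pnorm_minus_commute: "pnorm (u - v) = pnorm (v - u)"
  unfolding pnorm_def by (simp add: norm_minus_commute)

lemma log_rate_le_powr_rate:
  fixes t n :: real
  assumes "0 \<le> C" "0 \<le> K" "0 < p" "p < r" "0 \<le> t" "t \<le> tmax" "1 \<le> n"
  shows "C * t powr r * ln n / n powr r * K \<le> (C * tmax powr r * K / (r - p)) * n powr - p"
proof -
  have "C * t powr r * ln n / n powr r * K
      \<le> C * tmax powr r * (n powr (r - p) / (r - p)) / n powr r * K"
    using assms ln_powr_bound[of n "r - p"]
    by (intro mult_right_mono divide_right_mono mult_mono mult_left_mono powr_mono2) auto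
  also have "\<dots> = (C * tmax powr r * K / (r - p)) * (n powr (r - p) / n powr r)"
    by (simp add: field_simps)
  also have "n powr (r - p) / n powr r = n powr - p"
    using assms by (simp add: powr_diff[symmetric])
  finally show ?thesis .
qed

theorem proposition4p3:
  fixes domAm :: "'e::banach set" and Am :: "'e \<Rightarrow> 'e"
    and domB :: "'f::banach set" and B :: "'f \<Rightarrow> 'f"
    and L :: "'e \<Rightarrow> 'f"
    and T0 :: "real \<Rightarrow> 'e \<Rightarrow> 'e" and S :: "real \<Rightarrow> 'f \<Rightarrow> 'f"
    and D0 :: "'f \<Rightarrow> 'e"
    and Q :: "real \<Rightarrow> 'f \<Rightarrow> 'e"
    and calT :: "real \<Rightarrow> 'e \<times> 'f \<Rightarrow> 'e \<times> 'f"
    and V :: "real \<Rightarrow> 'f \<Rightarrow> 'e"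
    and bbT :: "real \<Rightarrow> 'e \<times> 'f \<Rightarrow> 'e \<times> 'f"
    and Vn :: "nat \<Rightarrow> real \<Rightarrow> 'f \<Rightarrow> 'e"
    and R0 :: "'e \<times> 'f \<Rightarrow> 'e \<times> 'f"
    and D :: "'f set" and normD :: "'f \<Rightarrow> real"
    and r tmax C :: real
  assumes domAm_sub: "subspace domAm" and Am_lin: "linear_op_on domAm Am"
    and domB_sub: "subspace domB" and B_lin: "linear_op_on domB B"
    and L_lin: "linear_op_on domAm L"
    and L_surj: "L ` domAm = UNIV"
    and L_bdd: "\<exists>K. \<forall>x\<in>domAm. norm (L x) \<le> K * (norm x + norm (Am x))"
    and A0_gen: "generates {x\<in>domAm. L x = 0} Am T0"
    and B_gen: "generates domB B S"
    and closed_AmL: "closed {(x, (Am x, L x)) | x. x \<in> domAm}"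
    and A0_inv: "boundedly_invertible {x\<in>domAm. L x = 0} Am"
    and B_inv: "boundedly_invertible domB B"
    and D0_def: "D0 = the_inv_into {x\<in>domAm. Am x = 0} L"
    and Q_ext: "\<forall>t\<ge>0. bounded_linear (Q t) \<and>
        (\<forall>y\<in>domB. Q t y = D0 (S t y) - T0 t (D0 y)
                           - integral {0..t} (\<lambda>s. T0 (t - s) (D0 (S s (B y)))))"
    and Q_limsup: "Limsup (at_right 0) (\<lambda>t. ereal (onorm (Q t))) < \<infinity>"
    and calT_def: "\<forall>t x y. calT t (x, y) = (T0 t x + Q t y, S t y)"
    and V_lin: "\<forall>\<tau>>0. linear_op_on domB (V \<tau>)"
    and bbT_def: "\<forall>\<tau> x y. bbT \<tau> (x, y) = (T0 \<tau> x + V \<tau> y, S \<tau> y)"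
    and Vn_def: "\<forall>n \<tau> y. Vn n \<tau> y =
        (\<Sum>j<n. T0 (real (n - 1 - j) * \<tau>) (V \<tau> (S (real j * \<tau>) y)))"
    and R0_def: "\<forall>x y. R0 (x, y) = (x - D0 y, y)"
    and D_sub: "subspace D" and D_domB: "D \<subseteq> domB"
    and normD_nonneg: "\<forall>y\<in>D. 0 \<le> normD y"
    and normD_zero: "\<forall>y\<in>D. normD y = 0 \<longleftrightarrow> y = 0"
    and normD_hom: "\<forall>c. \<forall>y\<in>D. normD (c *\<^sub>R y) = \<bar>c\<bar> * normD y"
    and normD_tri: "\<forall>y\<in>D. \<forall>z\<in>D. normD (y + z) \<le> normD y + normD z"
    and r_nonneg: "0 \<le> r" and tmax_pos: "0 < tmax" and C_nonneg: "0 \<le> C"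
    and V_est: "\<forall>y\<in>D. \<forall>t\<in>{0..tmax}. \<forall>n::nat. n \<ge> 1 \<longrightarrow>
        norm (Vn n (t / real n) y + integral {0..t} (\<lambda>s. T0 (t - s) (D0 (S s (B y)))))
          \<le> C * (if r = 0 then 1 else t powr r) * ln (real n) / real n powr r * normD y"
  shows "(\<forall>x. \<forall>y\<in>D. \<forall>t\<in>{0..tmax}. \<forall>n::nat. n \<ge> 1 \<longrightarrow>
            pnorm ((inv R0 \<circ> (bbT (t / real n) ^^ n) \<circ> R0) (x, y) - calT t (x, y))
              \<le> C * (if r = 0 then 1 else t powr r) * ln (real n) / real n powr r * normD y)
       \<and> (\<forall>p. 0 < p \<and> p < r \<longrightarrow>
            (\<forall>u0. fst u0 \<in> UNIV \<and> snd u0 \<in> D \<longrightarrow>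
              (\<exists>C'\<ge>0. \<forall>t\<in>{0..tmax}. \<forall>n::nat. n \<ge> 1 \<longrightarrow>
                 pnorm (calT t u0 - (inv R0 \<circ> (bbT (t / real n) ^^ n) \<circ> R0) u0)
                   \<le> C' * real n powr (- p))))"
proof -
  have T0: "c0_semigroup T0" and S: "c0_semigroup S"
    using A0_gen B_gen by (auto intro: generates_c0_semigroup)
  have R0_eq: "R0 = (\<lambda>(x, y). (x - D0 y, y))"
    and bbT_eq: "bbT \<tau> = (\<lambda>(x, y). (T0 \<tau> x + V \<tau> y, S \<tau> y))" for \<tau>
    using R0_def bbT_def by auto
  have error: "(inv R0 \<circ> (bbT (t / real n) ^^ n) \<circ> R0) (x, y) - calT t (x, y) =
      (Vn n (t / real n) y + integral {0..t} (\<lambda>s. T0 (t - s) (D0 (S s (B y)))), 0)"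
    if "y \<in> domB" "0 \<le> t" "1 \<le> n" for x y t n
    using that Q_ext calT_def Vn_def
    by (simp add: R0_eq bbT_eq triangular_funpow[OF T0 S] inv_shear
        linear_diff[OF c0_semigroup_linear[OF T0]])
  have log_rate: "pnorm ((inv R0 \<circ> (bbT (t / real n) ^^ n) \<circ> R0) (x, y) - calT t (x, y))
      \<le> C * (if r = 0 then 1 else t powr r) * ln (real n) / real n powr r * normD y"
    if "y \<in> D" "t \<in> {0..tmax}" "1 \<le> n" for x y t n
  proof -
    have "y \<in> domB" using that D_domB by auto
    with that show ?thesis using error[of y t n x] V_est unfolding pnorm_def by simp
  qed
  have powr_rate: "pnorm (calT t u0 - (inv R0 \<circ> (bbT (t / real n) ^^ n) \<circ> R0) u0)
      \<le> (C * tmax powr r * normD (snd u0) / (r - p)) * real n powr - p"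
    if "0 < p" "p < r" "snd u0 \<in> D" "t \<in> {0..tmax}" "1 \<le> n" for p u0 t n
    using that log_rate[of "snd u0" t n "fst u0"] normD_nonneg C_nonneg
      log_rate_le_powr_rate[of C "normD (snd u0)" p r t tmax n]
    by (simp add: pnorm_minus_commute)
  show ?thesis
  proof (intro conjI allI ballI impI)
    fix p :: real and u0 :: "'e \<times> 'f"
    assume "0 < p \<and> p < r" "fst u0 \<in> UNIV \<and> snd u0 \<in> D"
    then show "\<exists>C'\<ge>0. \<forall>t\<in>{0..tmax}. \<forall>n::nat. n \<ge> 1 \<longrightarrow>
        pnorm (calT t u0 - (inv R0 \<circ> (bbT (t / real n) ^^ n) \<circ> R0) u0) \<le> C' * real n powr (- p)"
      using powr_rate normD_nonneg C_nonneg
      by (intro exI[of _ "C * tmax powr r * normD (snd u0) / (r - p)"]) auto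
  qed (use log_rate in auto)
qed

end
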